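(* Let $\langle A_\alpha:\alpha<\mathfrak{p}\rangle$ be a tower. Let $X$ be the space on $(\omega\times\mathfrak{p})\cup\{\infty\}$ in which all points of $\omega\times\mathfrak{p}$ are isolated and a local subbase at $\infty$ consists of the sets $X\setminus(\{n\}\times\mathfrak{p})$ for $n<\omega$; $X\setminus(A_\alpha\times\alpha)$ for $\alpha<\mathfrak{p}$; and $X\setminus(B\times\alpha)$ where $\alpha<\mathfrak{p}$ has $\mathrm{cf}(\alpha)>\omega$ and $B$ is a pseudo-intersection of $\{A_\beta:\beta<\alpha\}$. Then $X$ is CFC, Fréchet, and not $L$-selective.
   Context: $\mathfrak{p}$ is the pseudo-intersection number. A pseudo-intersection of a family of subsets of $\omega$ is a set $B\subseteq\omega$ with $B\subseteq^*A$ (inclusion modulo finite) for every $A$ in the family. A tower of length $\kappa$ is a sequence $\langle A_\alpha:\alpha<\kappa\rangle$ of infinite subsets of $\omega$ with $A_\beta\subseteq^*A_\alpha$ for $\alpha<\beta$ and no infinite pseudo-intersection. A space is CFC if every countable subspace is first countable; it is Fréchet if whenever $x\in\overline{A}$ some sequence in $A$ converges to $x$. $\mathcal{F}(X)$ is the set of nonempty closed subsets of $X$; $\varphi:Y\rightarrow\mathcal{F}(X)$ is lower semicontinuous if for every open $W\subseteq X$, $\{y:\varphi(y)\cap W\neq\emptyset\}$ is open. $X$ is $L$-selective if every lower semicontinuous $\varphi:\omega+1\rightarrow\mathcal{F}(X)$ ($\omega+1$ with the order topology) has a continuous selection $s$ with $s(y)\in\varphi(y)$ for all $y$. *)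

theory Defs
  imports "HOL-Analysis.Analysis"
begin

definition sfip :: "nat set set \<Rightarrow> bool" where
  "sfip F \<longleftrightarrow> (\<forall>G. G \<subseteq> F \<and> finite G \<longrightarrow> infinite (\<Inter>G))"

definition pseudo_int :: "nat set \<Rightarrow> nat set set \<Rightarrow> bool" where
  "pseudo_int B F \<longleftrightarrow> (\<forall>A\<in>F. finite (B - A))"

(* The well-order r on UNIV :: 'k set is (isomorphic to) the initial ordinal p,
   the pseudo-intersection number: the least cardinality of a family of
   subsets of omega with the SFIP and no infinite pseudo-intersection. *)
definition is_p_ordinal :: "'k rel \<Rightarrow> bool" where
  "is_p_ordinal r \<longleftrightarrow> card_order r \<and>
     (\<forall>F. sfip F \<and> \<not> (\<exists>B. infinite B \<and> pseudo_int B F) \<longrightarrow> (card_of (UNIV :: 'k set), card_of F) \<in> ordLeq) \<and>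
     (\<exists>F. sfip F \<and> \<not> (\<exists>B. infinite B \<and> pseudo_int B F) \<and> (card_of F, card_of (UNIV :: 'k set)) \<in> ordIso)"

definition lt :: "'k rel \<Rightarrow> 'k \<Rightarrow> 'k \<Rightarrow> bool" where
  "lt r \<beta> \<alpha> \<longleftrightarrow> (\<beta>, \<alpha>) \<in> r \<and> \<beta> \<noteq> \<alpha>"

definition cf_gt_omega :: "'k rel \<Rightarrow> 'k \<Rightarrow> bool" where
  "cf_gt_omega r \<alpha> \<longleftrightarrow> {\<beta>. lt r \<beta> \<alpha>} \<noteq> {} \<and>
     (\<forall>C. C \<subseteq> {\<beta>. lt r \<beta> \<alpha>} \<and> countable C \<longrightarrow>
        (\<exists>\<gamma>. lt r \<gamma> \<alpha> \<and> (\<forall>\<beta>\<in>C. lt r \<beta> \<gamma>)))"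

definition tower :: "'k rel \<Rightarrow> ('k \<Rightarrow> nat set) \<Rightarrow> bool" where
  "tower r A \<longleftrightarrow> (\<forall>\<alpha>. infinite (A \<alpha>)) \<and>
     (\<forall>\<alpha> \<beta>. lt r \<alpha> \<beta> \<longrightarrow> finite (A \<beta> - A \<alpha>)) \<and>
     \<not> (\<exists>B. infinite B \<and> pseudo_int B (range A))"

(* The space X on (omega \<times> p) \<union> {\<infinity>}; None plays the role of \<infinity>.
   Points Some p are isolated; the listed sets form a local subbase at \<infinity>. *)
definition tower_space :: "'k rel \<Rightarrow> ('k \<Rightarrow> nat set) \<Rightarrow> (nat \<times> 'k) option topology" where
  "tower_space r A = topology_generated_by
     ({{Some p} | p. True}
      \<union> {- (Some ` ({n} \<times> UNIV)) | n. True}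
      \<union> {- (Some ` (A \<alpha> \<times> {\<beta>. lt r \<beta> \<alpha>})) | \<alpha>. True}
      \<union> {- (Some ` (B \<times> {\<beta>. lt r \<beta> \<alpha>})) | \<alpha> B.
            cf_gt_omega r \<alpha> \<and> pseudo_int B (A ` {\<beta>. lt r \<beta> \<alpha>})})"

definition CFC :: "'a topology \<Rightarrow> bool" where
  "CFC X \<longleftrightarrow> (\<forall>S. S \<subseteq> topspace X \<and> countable S \<longrightarrow> first_countable (subtopology X S))"

definition frechet_space :: "'a topology \<Rightarrow> bool" where
  "frechet_space X \<longleftrightarrow> (\<forall>A x. A \<subseteq> topspace X \<and> x \<in> X closure_of A \<longrightarrow>
     (\<exists>\<sigma>. (\<forall>n. \<sigma> n \<in> A) \<and> limitin X \<sigma> x sequentially))"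

definition lsc_closed :: "'b topology \<Rightarrow> 'a topology \<Rightarrow> ('b \<Rightarrow> 'a set) \<Rightarrow> bool" where
  "lsc_closed Y X \<phi> \<longleftrightarrow>
     (\<forall>y\<in>topspace Y. closedin X (\<phi> y) \<and> \<phi> y \<noteq> {}) \<and>
     (\<forall>W. openin X W \<longrightarrow> openin Y {y \<in> topspace Y. \<phi> y \<inter> W \<noteq> {}})"

(* L-selective; omega+1 with the order topology is enat with its order topology *)
definition L_selective :: "'a topology \<Rightarrow> bool" where
  "L_selective X \<longleftrightarrow> (\<forall>\<phi>. lsc_closed (euclidean :: enat topology) X \<phi> \<longrightarrow>
     (\<exists>s. continuous_map (euclidean :: enat topology) X s \<and> (\<forall>y. s y \<in> \<phi> y)))"

end

(*
  Only the point None, standing for \<infinity>, is not isolated. Call the complements of the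
  subbasic neighbourhoods of \<infinity> blocks: the columns {n} \<times> p, the sets A\<^sub>\<alpha> \<times> \<alpha>, and
  B \<times> \<alpha> for pseudo-intersections B of {A\<^sub>\<beta> : \<beta> < \<alpha>} with cf \<alpha> > \<omega>. Then \<infinity> lies
  in the closure of P \<subseteq> \<omega> \<times> p iff P is not covered by finitely many blocks, and a sequence
  converges to \<infinity> iff it meets every block only finitely often. As the tower has no
  infinite pseudo-intersection, every countable set of ordinals below p is bounded below p.

  Frechet: let P be not finitely covered and \<gamma> least such that already the part of P below
  level \<gamma> is not. If cf \<gamma> = \<omega>, points of P in distinct columns outside A\<^sub>\<gamma>, at levels
  climbing along a cofinal sequence in \<gamma>, form a sequence converging to \<infinity>. If cf \<gamma> > \<omega>
  and there is no such sequence, the columns that reach every level below \<gamma> form a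
  pseudo-intersection U of {A\<^sub>\<beta> : \<beta> < \<gamma>} and the other points of P lie below some \<delta> < \<gamma>;
  so the block U \<times> \<gamma> and finitely many blocks below \<delta> cover the part below \<gamma> after all.

  CFC: for countable P, the intersection of a block X \<times> \<alpha> with P only depends on the trace
  of \<alpha> on the countable set of levels of P. There are countably many traces, and replacing \<alpha>
  by the least ordinal with the same trace covers every block, on P, by finitely many blocks
  of a countable family.

  Not L-selective: n \<mapsto> {n} \<times> p, \<omega> \<mapsto> {\<infinity>} is lower semicontinuous, but the levels of a
  selection on \<omega> are bounded by some \<delta>, so the block A\<^sub>\<delta> \<times> \<delta> contains the selected points
  in the infinitely many columns of A\<^sub>\<delta> and the selection does not converge to \<infinity>.
*)

theory Submission
  imports Defs
begin

abbreviation below :: "'k rel \<Rightarrow> 'k \<Rightarrow> 'k set" where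
  "below r \<alpha> \<equiv> {\<beta>. lt r \<beta> \<alpha>}"

lemma strict_mono_choice:
  fixes Q :: "nat \<Rightarrow> nat set"
  assumes "\<And>m. infinite (Q m)"
  shows "\<exists>k. strict_mono k \<and> (\<forall>m. k m \<in> Q m)"
proof -
  have "\<exists>x. x \<in> Q m \<and> y < x" for m y
    using assms[of m] unfolding infinite_nat_iff_unbounded by blast
  then have "\<exists>k. \<forall>m. k m \<in> Q m \<and> k m < k (Suc m)"
    by (intro dependent_nat_choice) auto
  then show ?thesis
    by (auto simp: strict_mono_Suc_iff)
qed

lemma diagonal_pseudo_intersection:
  fixes B :: "nat \<Rightarrow> nat set"
  assumes "\<And>m. infinite (\<Inter>i\<le>m. B i)"
  obtains D where "infinite D" "\<And>i. finite (D - B i)"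
proof -
  obtain k where k: "strict_mono k" "\<forall>m. k m \<in> (\<Inter>i\<le>m. B i)"
    using strict_mono_choice[of "\<lambda>m. \<Inter>i\<le>m. B i"] assms by blast
  have "finite (range k - B i)" for i
  proof (rule finite_subset)
    have "m < i" if "k m \<notin> B i" for m
      using k(2) that by (metis INT_iff atMost_iff not_less)
    then show "range k - B i \<subseteq> k ` {..<i}"
      by auto
  qed simp
  moreover have "infinite (range k)"
    using k(1) strict_mono_imp_inj_on range_inj_infinite by blast
  ultimately show thesis
    using that by blast
qed

section \<open>Well-ordered index type\<close>

locale univ_well_order =
  fixes r :: "'k rel"
  assumes well_order: "well_order_on UNIV r"
begin

lemma Field_eq: "Field r = UNIV"
  using well_order_on_Field[OF well_order] by simp

lemma wo_rel: "wo_rel r"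
  using well_order Field_eq by (simp add: wo_rel_def)

lemma le_refl [simp]: "(a, a) \<in> r"
  using wo_rel.REFL[OF wo_rel] Field_eq by (simp add: refl_on_def)

lemma le_trans: "(a, b) \<in> r \<Longrightarrow> (b, c) \<in> r \<Longrightarrow> (a, c) \<in> r"
  using wo_rel.TRANS[OF wo_rel] by (meson transD)

lemma le_antisym: "(a, b) \<in> r \<Longrightarrow> (b, a) \<in> r \<Longrightarrow> a = b"
  using wo_rel.ANTISYM[OF wo_rel] by (meson antisymD)

lemma le_total: "(a, b) \<in> r \<or> (b, a) \<in> r"
  using wo_rel.TOTALS[OF wo_rel] Field_eq by simp

lemma not_lt_iff_le: "\<not> lt r a b \<longleftrightarrow> (b, a) \<in> r"
  unfolding lt_def using le_total le_antisym by auto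

lemma lt_le_trans: "lt r a b \<Longrightarrow> (b, c) \<in> r \<Longrightarrow> lt r a c"
  unfolding lt_def by (metis le_trans le_antisym)

lemma le_lt_trans: "(a, b) \<in> r \<Longrightarrow> lt r b c \<Longrightarrow> lt r a c"
  unfolding lt_def by (metis le_trans le_antisym)

lemma lt_trans: "lt r a b \<Longrightarrow> lt r b c \<Longrightarrow> lt r a c"
  unfolding lt_def by (metis le_trans le_antisym)

lemma lt_trichotomy: "lt r a b \<or> a = b \<or> lt r b a"
  unfolding lt_def using le_total by blast

lemma exists_least:
  assumes "X \<noteq> {}"
  shows "\<exists>m\<in>X. \<forall>x\<in>X. (m, x) \<in> r"
proof
  have "X \<subseteq> Field r"
    using Field_eq by simp
  then show "wo_rel.minim r X \<in> X" "\<forall>x\<in>X. (wo_rel.minim r X, x) \<in> r"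
    using wo_rel.minim_in[OF wo_rel] wo_rel.minim_least[OF wo_rel] assms by blast+
qed

lemma exists_greatest:
  assumes "finite X" "X \<noteq> {}"
  shows "\<exists>M\<in>X. \<forall>x\<in>X. (x, M) \<in> r"
  using assms
proof (induction rule: finite_ne_induct)
  case (insert x X)
  then obtain M where M: "M \<in> X" "\<forall>y\<in>X. (y, M) \<in> r"
    by blast
  show ?case
  proof (cases "(x, M) \<in> r")
    case True
    then show ?thesis
      using M by blast
  next
    case False
    then have "(M, x) \<in> r"
      using le_total by blast
    then have "\<forall>y\<in>insert x X. (y, x) \<in> r"
      using M le_trans by (metis insertE le_refl)
    then show ?thesis
      by blast
  qed
qed simp

lemma cofinal_seq_below:
  assumes "\<not> cf_gt_omega r \<gamma>" "below r \<gamma> \<noteq> {}"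
  obtains c where "\<And>m. lt r (c m) \<gamma>"
    "\<And>\<alpha>. lt r \<alpha> \<gamma> \<Longrightarrow> \<forall>\<^sub>F m in sequentially. (\<alpha>, c m) \<in> r"
proof -
  from assms obtain C where C: "C \<subseteq> below r \<gamma>" "countable C"
    and "\<forall>\<delta>. lt r \<delta> \<gamma> \<longrightarrow> \<not> (\<forall>\<beta>\<in>C. lt r \<beta> \<delta>)"
    unfolding cf_gt_omega_def by auto
  then have unbounded: "\<forall>\<delta>. lt r \<delta> \<gamma> \<longrightarrow> (\<exists>\<beta>\<in>C. (\<delta>, \<beta>) \<in> r)"
    by (simp add: not_lt_iff_le)
  then have "C \<noteq> {}"
    using assms(2) by blast
  define e where "e = from_nat_into C"
  have range_e: "range e = C"
    using range_from_nat_into[OF \<open>C \<noteq> {}\<close> C(2)] e_def by simp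
  have "\<exists>M\<in>e ` {..m}. \<forall>x\<in>e ` {..m}. (x, M) \<in> r" for m
    by (rule exists_greatest) auto
  then obtain c where c: "\<And>m. c m \<in> e ` {..m}" "\<And>m i. i \<le> m \<Longrightarrow> (e i, c m) \<in> r"
    by (metis atMost_iff imageI)
  show thesis
  proof (rule that)
    show "lt r (c m) \<gamma>" for m
      using c(1)[of m] range_e C(1) by blast
    show "\<forall>\<^sub>F m in sequentially. (\<alpha>, c m) \<in> r" if \<alpha>: "lt r \<alpha> \<gamma>" for \<alpha>
    proof -
      obtain i where "(\<alpha>, e i) \<in> r"
        using unbounded \<alpha> range_e by blast
      then have "(\<alpha>, c m) \<in> r" if "i \<le> m" for m
        using c(2)[OF that] le_trans by metis
      then show ?thesis
        unfolding eventually_sequentially by blast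
    qed
  qed
qed

lemma countable_traces:
  assumes "countable H"
  shows "countable (range (\<lambda>a. H \<inter> below r a))"
proof -
  have "H \<inter> below r a \<in> insert H ((\<lambda>h. H \<inter> below r h) ` H)" for a
  proof (cases "H \<subseteq> below r a")
    case False
    then obtain h where h: "h \<in> H" "\<not> lt r h a" and least: "\<And>x. x \<in> H \<Longrightarrow> \<not> lt r x a \<Longrightarrow> (h, x) \<in> r"
      using exists_least[of "{x \<in> H. \<not> lt r x a}"] by auto
    have "H \<inter> below r a = H \<inter> below r h"
    proof (intro set_eqI iffI)
      fix x assume "x \<in> H \<inter> below r a"
      then show "x \<in> H \<inter> below r h"
        using h(2) lt_le_trans by (auto simp: not_lt_iff_le)
    next
      fix x assume x: "x \<in> H \<inter> below r h"
      then have "(h, x) \<notin> r"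
        by (simp add: not_lt_iff_le[symmetric])
      then show "x \<in> H \<inter> below r a"
        using x least by blast
    qed
    then show ?thesis
      using h(1) by blast
  qed blast
  then have "range (\<lambda>a. H \<inter> below r a) \<subseteq> insert H ((\<lambda>h. H \<inter> below r h) ` H)"
    by blast
  moreover have "countable (insert H ((\<lambda>h. H \<inter> below r h) ` H))"
    using assms by simp
  ultimately show ?thesis
    by (rule countable_subset)
qed

lemma least_trace_representatives:
  assumes "countable H"
  obtains s where "countable (range s)"
    "\<And>a. H \<inter> below r (s a) = H \<inter> below r a"
    "\<And>a b. H \<inter> below r b = H \<inter> below r a \<Longrightarrow> (s a, b) \<in> r"
proof -
  have "\<exists>b. H \<inter> below r b = T \<and> (\<forall>b'. H \<inter> below r b' = T \<longrightarrow> (b, b') \<in> r)"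
    if "T \<in> range (\<lambda>a. H \<inter> below r a)" for T
    using exists_least[of "{b. H \<inter> below r b = T}"] that by auto
  then obtain g where g: "\<And>T. T \<in> range (\<lambda>a. H \<inter> below r a) \<Longrightarrow>
      H \<inter> below r (g T) = T \<and> (\<forall>b'. H \<inter> below r b' = T \<longrightarrow> (g T, b') \<in> r)"
    by metis
  show thesis
  proof (rule that[of "\<lambda>a. g (H \<inter> below r a)"])
    have "range (\<lambda>a. g (H \<inter> below r a)) = g ` range (\<lambda>a. H \<inter> below r a)"
      by auto
    then show "countable (range (\<lambda>a. g (H \<inter> below r a)))"
      using countable_traces[OF assms] by simp
  qed (use g in auto)
qed

lemma trace_below_uncountable_cofinality:
  assumes "cf_gt_omega r a" "countable H"
  obtains g where "lt r g a" "H \<inter> below r g = H \<inter> below r a"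
proof -
  have "H \<inter> below r a \<subseteq> below r a" "countable (H \<inter> below r a)"
    using assms(2) by auto
  then obtain g where g: "lt r g a" "\<forall>x\<in>H \<inter> below r a. lt r x g"
    using assms(1) unfolding cf_gt_omega_def by meson
  then have "H \<inter> below r g = H \<inter> below r a"
    using lt_trans by blast
  then show thesis
    using that g(1) by blast
qed

end

section \<open>Towers\<close>

locale tower_setting = univ_well_order r for r :: "'k rel" +
  fixes A :: "'k \<Rightarrow> nat set"
  assumes tower: "tower r A"
begin

lemma infinite_A: "infinite (A \<alpha>)"
  using tower unfolding tower_def by blast

lemma A_almost_antimono: "(\<alpha>, \<beta>) \<in> r \<Longrightarrow> finite (A \<beta> - A \<alpha>)"
  using tower unfolding tower_def lt_def by (cases "\<alpha> = \<beta>") auto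

lemma sfip_range_A: "sfip (range A)"
  unfolding sfip_def
proof (intro allI impI)
  fix G assume "G \<subseteq> range A \<and> finite G"
  then obtain X where X: "finite X" "G = A ` X"
    by (meson finite_subset_image)
  show "infinite (\<Inter>G)"
  proof (cases "X = {}")
    case False
    obtain M where M: "\<forall>\<alpha>\<in>X. (\<alpha>, M) \<in> r"
      using exists_greatest[OF X(1) False] by blast
    have "finite (\<Union>\<alpha>\<in>X. A M - A \<alpha>)"
      using X(1) M A_almost_antimono by (intro finite_UN_I) auto
    moreover have "A M \<subseteq> \<Inter>G \<union> (\<Union>\<alpha>\<in>X. A M - A \<alpha>)"
      using X(2) by blast
    ultimately show ?thesis
      using infinite_A[of M] by (meson finite_Un finite_subset)
  qed (use X in simp)
qed

lemma countable_bounded: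
  assumes "countable C"
  shows "\<exists>\<delta>. \<forall>\<gamma>\<in>C. lt r \<gamma> \<delta>"
proof (rule ccontr)
  assume "\<not> ?thesis"
  then have cofinal: "\<forall>\<alpha>. \<exists>\<gamma>\<in>C. (\<alpha>, \<gamma>) \<in> r"
    using not_lt_iff_le by blast
  then have "C \<noteq> {}" by blast
  define e where "e = from_nat_into C"
  have range_e: "range e = C"
    using range_from_nat_into[OF \<open>C \<noteq> {}\<close> assms] e_def by simp
  have "infinite (\<Inter>i\<le>m. A (e i))" for m
    using sfip_range_A unfolding sfip_def
    by (metis finite_atMost finite_imageI image_image image_subset_iff rangeI)
  then obtain D where D: "infinite D" "\<And>i. finite (D - A (e i))"
    by (rule diagonal_pseudo_intersection) blast
  have "finite (D - A \<alpha>)" for \<alpha>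
  proof -
    obtain i where i: "(\<alpha>, e i) \<in> r"
      using cofinal range_e by blast
    have "D - A \<alpha> \<subseteq> (D - A (e i)) \<union> (A (e i) - A \<alpha>)"
      by blast
    then show ?thesis
      using D(2)[of i] A_almost_antimono[OF i] by (meson finite_UnI finite_subset)
  qed
  then have "pseudo_int D (range A)"
    unfolding pseudo_int_def by blast
  then show False
    using tower D(1) unfolding tower_def by blast
qed

end

section \<open>Blocks and the neighbourhoods of the point at infinity\<close>

definition blocks :: "'k rel \<Rightarrow> ('k \<Rightarrow> nat set) \<Rightarrow> (nat \<times> 'k) set set" where
  "blocks r A = range (\<lambda>n. {n} \<times> UNIV) \<union> range (\<lambda>\<alpha>. A \<alpha> \<times> below r \<alpha>)
     \<union> {B \<times> below r \<alpha> | \<alpha> B. cf_gt_omega r \<alpha> \<and> pseudo_int B (A ` below r \<alpha>)}"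

definition finitely_blocked :: "'k rel \<Rightarrow> ('k \<Rightarrow> nat set) \<Rightarrow> (nat \<times> 'k) set \<Rightarrow> bool" where
  "finitely_blocked r A P \<longleftrightarrow> (\<exists>F. finite F \<and> F \<subseteq> blocks r A \<and> P \<subseteq> \<Union>F)"

definition escapes_blocks :: "'k rel \<Rightarrow> ('k \<Rightarrow> nat set) \<Rightarrow> (nat \<Rightarrow> nat \<times> 'k) \<Rightarrow> bool" where
  "escapes_blocks r A \<sigma> \<longleftrightarrow> (\<forall>c\<in>blocks r A. finite {m. \<sigma> m \<in> c})"

definition has_escaping_seq :: "'k rel \<Rightarrow> ('k \<Rightarrow> nat set) \<Rightarrow> (nat \<times> 'k) set \<Rightarrow> bool" where
  "has_escaping_seq r A P \<longleftrightarrow> (\<exists>\<sigma>. range \<sigma> \<subseteq> P \<and> escapes_blocks r A \<sigma>)"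

lemma column_in_blocks: "{n} \<times> UNIV \<in> blocks r A"
  unfolding blocks_def by (intro UnI1 rangeI)

lemma tower_block_in_blocks: "A \<alpha> \<times> below r \<alpha> \<in> blocks r A"
  unfolding blocks_def by (intro UnI1 UnI2 rangeI)

lemma tower_space_eq:
  "tower_space r A =
     topology_generated_by (range (\<lambda>p. {Some p}) \<union> (\<lambda>c. - Some ` c) ` blocks r A)"
proof -
  have eqs: "(\<lambda>c. - Some ` c) ` range (\<lambda>n. {n} \<times> UNIV) = {- Some ` ({n} \<times> UNIV) | n. True}"
    "(\<lambda>c. - Some ` c) ` range (\<lambda>\<alpha>. A \<alpha> \<times> below r \<alpha>) = {- Some ` (A \<alpha> \<times> below r \<alpha>) | \<alpha>. True}"
    "(\<lambda>c. - Some ` c) ` {B \<times> below r \<alpha> | \<alpha> B. cf_gt_omega r \<alpha> \<and> pseudo_int B (A ` below r \<alpha>)} =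
       {- Some ` (B \<times> below r \<alpha>) | \<alpha> B. cf_gt_omega r \<alpha> \<and> pseudo_int B (A ` below r \<alpha>)}"
    "range (\<lambda>p. {Some p}) = {{Some p} | p. True}"
    by blast+
  show ?thesis
    unfolding tower_space_def blocks_def image_Un eqs Un_assoc ..
qed

lemma topspace_tower_space [simp]: "topspace (tower_space r A) = UNIV"
proof -
  have "None \<in> - Some ` ({0} \<times> UNIV)"
    by blast
  then have "x \<in> \<Union>(range (\<lambda>p. {Some p}) \<union> (\<lambda>c. - Some ` c) ` blocks r A)" for x
    using column_in_blocks[of 0 r A] by (cases x) auto
  then show ?thesis
    unfolding tower_space_eq topology_generated_by_topspace by blast
qed

lemma openin_tower_space_Some: "openin (tower_space r A) {Some p}"
  unfolding tower_space_eq openin_topology_generated_by_iff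
  by (rule generate_topology_on.Basis) blast

lemma openin_tower_space_blocks_compl:
  assumes "finite F" "F \<subseteq> blocks r A"
  shows "openin (tower_space r A) (- Some ` \<Union>F)"
  using assms
proof (induction rule: finite_induct)
  case empty
  then show ?case
    using openin_topspace[of "tower_space r A"] by simp
next
  case (insert c F)
  have "openin (tower_space r A) (- Some ` c)"
    unfolding tower_space_eq openin_topology_generated_by_iff
    using insert.prems by (intro generate_topology_on.Basis) blast
  then have "openin (tower_space r A) (- Some ` c \<inter> - Some ` \<Union>F)"
    using insert by (intro openin_Int) auto
  moreover have "- Some ` \<Union>(insert c F) = - Some ` c \<inter> - Some ` \<Union>F"
    by blast
  ultimately show ?case
    by simp
qed

lemma tower_space_nhds_None:
  assumes "openin (tower_space r A) W" "None \<in> W"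
  shows "\<exists>F. finite F \<and> F \<subseteq> blocks r A \<and> - Some ` \<Union>F \<subseteq> W"
proof -
  have "generate_topology_on (range (\<lambda>p. {Some p}) \<union> (\<lambda>c. - Some ` c) ` blocks r A) W"
    using assms(1) unfolding tower_space_eq openin_topology_generated_by_iff .
  then show ?thesis
    using assms(2)
  proof (induction rule: generate_topology_on.induct)
    case (Int V W)
    then obtain F G where F: "finite F" "F \<subseteq> blocks r A" "- Some ` \<Union>F \<subseteq> V"
      and G: "finite G" "G \<subseteq> blocks r A" "- Some ` \<Union>G \<subseteq> W"
      by (meson IntD1 IntD2)
    have "- Some ` \<Union>(F \<union> G) \<subseteq> - Some ` \<Union>F \<inter> - Some ` \<Union>G"
      by auto
    also have "\<dots> \<subseteq> V \<inter> W"
      using F(3) G(3) by (rule Int_mono)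
    finally show ?case
      using F G by (intro exI[of _ "F \<union> G"]) auto
  next
    case (UN K)
    then obtain W where "W \<in> K" "None \<in> W"
      by blast
    then obtain F where "finite F" "F \<subseteq> blocks r A" "- Some ` \<Union>F \<subseteq> W"
      using UN.IH by meson
    then show ?case
      using \<open>W \<in> K\<close> by (intro exI[of _ F]) auto
  next
    case (Basis W)
    then obtain c where "c \<in> blocks r A" "W = - Some ` c"
      by auto
    then show ?case
      by (intro exI[of _ "{c}"]) auto
  qed simp
qed

lemma not_finitely_blocked_if_in_closure:
  assumes "None \<in> tower_space r A closure_of (Some ` P)"
  shows "\<not> finitely_blocked r A P"
proof
  assume "finitely_blocked r A P"
  then obtain F where F: "finite F" "F \<subseteq> blocks r A" "P \<subseteq> \<Union>F"
    unfolding finitely_blocked_def by blast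
  have "openin (tower_space r A) (- Some ` \<Union>F)"
    using F(1,2) by (rule openin_tower_space_blocks_compl)
  moreover have "- Some ` \<Union>F \<inter> Some ` P = {}"
    using F(3) by blast
  ultimately have "- Some ` \<Union>F \<inter> tower_space r A closure_of (Some ` P) = {}"
    by (simp only: openin_Int_closure_of_eq_empty)
  then show False
    using assms by auto
qed

lemma limitin_None_if_escapes_blocks:
  assumes "escapes_blocks r A \<sigma>"
  shows "limitin (tower_space r A) (\<lambda>m. Some (\<sigma> m)) None sequentially"
  unfolding limitin_def
proof (intro conjI allI impI)
  fix W assume "openin (tower_space r A) W \<and> None \<in> W"
  then obtain F where F: "finite F" "F \<subseteq> blocks r A" "- Some ` \<Union>F \<subseteq> W"
    using tower_space_nhds_None by meson
  have "\<forall>c\<in>F. eventually (\<lambda>m. \<sigma> m \<notin> c) sequentially"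
  proof
    fix c assume "c \<in> F"
    then have "finite {m. \<sigma> m \<in> c}"
      using assms F(2) unfolding escapes_blocks_def by blast
    then show "eventually (\<lambda>m. \<sigma> m \<notin> c) sequentially"
      unfolding cofinite_eq_sequentially[symmetric] eventually_cofinite by simp
  qed
  then have "eventually (\<lambda>m. \<forall>c\<in>F. \<sigma> m \<notin> c) sequentially"
    by (rule eventually_ball_finite[OF F(1)])
  moreover have "Some (\<sigma> m) \<in> W" if "\<forall>c\<in>F. \<sigma> m \<notin> c" for m
    using that F(3) by blast
  ultimately show "eventually (\<lambda>m. Some (\<sigma> m) \<in> W) sequentially"
    by (rule eventually_mono)
qed simp

lemma finitely_blocked_subset: "finitely_blocked r A P \<Longrightarrow> Q \<subseteq> P \<Longrightarrow> finitely_blocked r A Q"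
  unfolding finitely_blocked_def by blast

lemma finitely_blocked_Un:
  assumes "finitely_blocked r A P" "finitely_blocked r A Q"
  shows "finitely_blocked r A (P \<union> Q)"
proof -
  obtain F G where "finite F" "F \<subseteq> blocks r A" "P \<subseteq> \<Union>F" "finite G" "G \<subseteq> blocks r A" "Q \<subseteq> \<Union>G"
    using assms unfolding finitely_blocked_def by blast
  then show ?thesis
    unfolding finitely_blocked_def by (intro exI[of _ "F \<union> G"]) auto
qed

lemma finitely_blocked_block: "c \<in> blocks r A \<Longrightarrow> finitely_blocked r A c"
  unfolding finitely_blocked_def by (intro exI[of _ "{c}"]) auto

lemma finitely_blocked_columns: "finite K \<Longrightarrow> finitely_blocked r A (K \<times> UNIV)"
  unfolding finitely_blocked_def
  by (intro exI[of _ "(\<lambda>n. {n} \<times> UNIV) ` K"]) (auto simp: column_in_blocks)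

lemma finitely_blocked_empty [simp]: "finitely_blocked r A {}"
  unfolding finitely_blocked_def by blast

lemma infinite_columns_outside_tower_block:
  assumes "\<not> finitely_blocked r A R" "R \<subseteq> UNIV \<times> below r \<gamma>"
  shows "infinite {k. k \<notin> A \<gamma> \<and> (\<exists>h. (k, h) \<in> R)}"
proof
  assume "finite {k. k \<notin> A \<gamma> \<and> (\<exists>h. (k, h) \<in> R)}"
  then have "finitely_blocked r A (A \<gamma> \<times> below r \<gamma> \<union> {k. k \<notin> A \<gamma> \<and> (\<exists>h. (k, h) \<in> R)} \<times> UNIV)"
    by (intro finitely_blocked_Un finitely_blocked_block tower_block_in_blocks
        finitely_blocked_columns)
  moreover have "R \<subseteq> A \<gamma> \<times> below r \<gamma> \<union> {k. k \<notin> A \<gamma> \<and> (\<exists>h. (k, h) \<in> R)} \<times> UNIV"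
    using assms(2) by blast
  ultimately show False
    using assms(1) finitely_blocked_subset by blast
qed

section \<open>Frechet property\<close>

context tower_setting
begin

lemma block_cases:
  assumes "c \<in> blocks r A"
  obtains (column) n where "c = {n} \<times> UNIV"
  | (product) X \<alpha> where "c = X \<times> below r \<alpha>" "lt r \<gamma> \<alpha> \<Longrightarrow> finite (X - A \<gamma>)"
      "\<alpha> = \<gamma> \<Longrightarrow> X = A \<gamma> \<or> cf_gt_omega r \<gamma>"
proof -
  consider n where "c = {n} \<times> UNIV" | \<alpha> where "c = A \<alpha> \<times> below r \<alpha>"
    | \<alpha> B where "c = B \<times> below r \<alpha>" "cf_gt_omega r \<alpha>" "pseudo_int B (A ` below r \<alpha>)"
    using assms unfolding blocks_def by blast
  then show thesis
  proof cases
    case 1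
    then show ?thesis
      by (rule column)
  next
    case (2 \<alpha>)
    show ?thesis
    proof (rule product[OF 2])
      show "finite (A \<alpha> - A \<gamma>)" if "lt r \<gamma> \<alpha>"
        using that A_almost_antimono unfolding lt_def by blast
    qed simp
  next
    case (3 \<alpha> B)
    show ?thesis
    proof (rule product[OF 3(1)])
      show "finite (B - A \<gamma>)" if "lt r \<gamma> \<alpha>"
        using 3(3) that unfolding pseudo_int_def by blast
      show "B = A \<gamma> \<or> cf_gt_omega r \<gamma>" if "\<alpha> = \<gamma>"
        using 3(2) that by blast
    qed
  qed
qed

lemma escapes_blocksI:
  assumes "inj k" "\<And>m. k m \<notin> A \<gamma>"
    and eventually_above: "\<And>\<alpha>. lt r \<alpha> \<gamma> \<Longrightarrow> \<forall>\<^sub>F m in sequentially. (\<alpha>, h m) \<in> r"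
    and above_if_cf: "\<And>m. cf_gt_omega r \<gamma> \<Longrightarrow> (\<gamma>, h m) \<in> r"
  shows "escapes_blocks r A (\<lambda>m. (k m, h m))"
  unfolding escapes_blocks_def
proof
  fix c assume "c \<in> blocks r A"
  then show "finite {m. (k m, h m) \<in> c}"
  proof (cases rule: block_cases[where \<gamma> = \<gamma>])
    case (column n)
    then have "{m. (k m, h m) \<in> c} = k -` {n}"
      by auto
    then show ?thesis
      using finite_vimageI[OF _ assms(1), of "{n}"] by simp
  next
    case (product X \<alpha>)
    have eq: "{m. (k m, h m) \<in> c} = {m. k m \<in> X \<and> lt r (h m) \<alpha>}"
      using product(1) by auto
    consider "lt r \<alpha> \<gamma>" | "\<alpha> = \<gamma>" | "lt r \<gamma> \<alpha>"
      using lt_trichotomy by blast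
    then show ?thesis
    proof cases
      case 1
      have "finite {m. (\<alpha>, h m) \<notin> r}"
        using eventually_above[OF 1]
        unfolding cofinite_eq_sequentially[symmetric] eventually_cofinite .
      then show ?thesis
        unfolding eq by (rule rev_finite_subset) (auto simp flip: not_lt_iff_le)
    next
      case 2
      then have empty: "{m. k m \<in> X \<and> lt r (h m) \<alpha>} = {}"
        using product(3) assms(2) above_if_cf not_lt_iff_le by blast
      show ?thesis
        unfolding eq empty by simp
    next
      case 3
      have "finite (k -` (X - A \<gamma>))"
        using finite_vimageI[OF product(2)[OF 3] assms(1)] .
      then show ?thesis
        unfolding eq by (rule rev_finite_subset) (use assms(2) in auto)
    qed
  qed
qed

lemma has_escaping_seqI:
  assumes infinite: "\<And>m. infinite {k. k \<notin> A \<gamma> \<and> (\<exists>h. (k, h) \<in> R m)}"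
    and "\<And>m. R m \<subseteq> P"
    and "\<And>\<alpha>. lt r \<alpha> \<gamma> \<Longrightarrow> \<forall>\<^sub>F m in sequentially. R m \<subseteq> UNIV \<times> {h. (\<alpha>, h) \<in> r}"
    and "\<And>m. cf_gt_omega r \<gamma> \<Longrightarrow> R m \<subseteq> UNIV \<times> {h. (\<gamma>, h) \<in> r}"
  shows "has_escaping_seq r A P"
proof -
  obtain k where k: "strict_mono k" "\<And>m. k m \<in> {k. k \<notin> A \<gamma> \<and> (\<exists>h. (k, h) \<in> R m)}"
    using strict_mono_choice[of "\<lambda>m. {k. k \<notin> A \<gamma> \<and> (\<exists>h. (k, h) \<in> R m)}", OF infinite]
    by blast
  then have "\<forall>m. \<exists>h. (k m, h) \<in> R m"
    by blast
  then obtain h where h: "\<And>m. (k m, h m) \<in> R m"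
    by metis
  have "escapes_blocks r A (\<lambda>m. (k m, h m))"
  proof (rule escapes_blocksI)
    show "inj k"
      using k(1) strict_mono_imp_inj_on by blast
    show "k m \<notin> A \<gamma>" for m
      using k(2)[of m] by blast
    show "\<forall>\<^sub>F m in sequentially. (\<alpha>, h m) \<in> r" if "lt r \<alpha> \<gamma>" for \<alpha>
      using assms(3)[OF that] by (rule eventually_mono) (use h in blast)
    show "(\<gamma>, h m) \<in> r" if "cf_gt_omega r \<gamma>" for m
      using assms(4)[OF that] h by blast
  qed
  moreover have "range (\<lambda>m. (k m, h m)) \<subseteq> P"
    using h assms(2) by blast
  ultimately show ?thesis
    unfolding has_escaping_seq_def by blast
qed

lemma has_escaping_seq_above:
  assumes "infinite {k. k \<notin> A \<beta> \<and> (\<exists>h. (k, h) \<in> P \<and> (\<beta>, h) \<in> r)}"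
  shows "has_escaping_seq r A P"
proof (rule has_escaping_seqI[where \<gamma> = \<beta> and R = "\<lambda>_. P \<inter> UNIV \<times> {h. (\<beta>, h) \<in> r}"])
  show "infinite {k. k \<notin> A \<beta> \<and> (\<exists>h. (k, h) \<in> P \<inter> UNIV \<times> {h. (\<beta>, h) \<in> r})}"
    using assms by simp
  have "P \<inter> UNIV \<times> {h. (\<beta>, h) \<in> r} \<subseteq> UNIV \<times> {h. (\<alpha>, h) \<in> r}" if "lt r \<alpha> \<beta>" for \<alpha>
    using that le_trans unfolding lt_def by blast
  then show "\<forall>\<^sub>F m in sequentially. P \<inter> UNIV \<times> {h. (\<beta>, h) \<in> r} \<subseteq> UNIV \<times> {h. (\<alpha>, h) \<in> r}"
    if "lt r \<alpha> \<beta>" for \<alpha>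
    using that by simp
qed auto

lemma split_without_escaping_seq:
  assumes bounded: "\<And>C. C \<subseteq> G \<Longrightarrow> countable C \<Longrightarrow> \<exists>\<delta>\<in>G. \<forall>\<gamma>\<in>C. lt r \<gamma> \<delta>"
    and "\<not> has_escaping_seq r A P"
  obtains U \<delta> where "\<delta> \<in> G" "\<And>\<beta>. \<beta> \<in> G \<Longrightarrow> finite (U - A \<beta>)"
    "P \<subseteq> U \<times> UNIV \<union> UNIV \<times> below r \<delta>"
proof -
  define U where "U = {k. \<forall>\<alpha>\<in>G. \<exists>h. (k, h) \<in> P \<and> (\<alpha>, h) \<in> r}"
  have "finite (U - A \<beta>)" if "\<beta> \<in> G" for \<beta>
  proof (rule finite_subset)
    show "U - A \<beta> \<subseteq> {k. k \<notin> A \<beta> \<and> (\<exists>h. (k, h) \<in> P \<and> (\<beta>, h) \<in> r)}"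
      using that unfolding U_def by blast
    show "finite {k. k \<notin> A \<beta> \<and> (\<exists>h. (k, h) \<in> P \<and> (\<beta>, h) \<in> r)}"
      using has_escaping_seq_above assms(2) by blast
  qed
  moreover have "\<exists>\<alpha>\<in>G. \<forall>h. (k, h) \<in> P \<longrightarrow> lt r h \<alpha>" if "k \<notin> U" for k
    using that unfolding U_def by (auto simp flip: not_lt_iff_le)
  then obtain a where a: "\<And>k. k \<notin> U \<Longrightarrow> a k \<in> G \<and> (\<forall>h. (k, h) \<in> P \<longrightarrow> lt r h (a k))"
    by metis
  moreover obtain \<delta> where "\<delta> \<in> G" "\<forall>\<gamma>\<in>a ` (- U). lt r \<gamma> \<delta>"
    using bounded[of "a ` (- U)"] a by auto
  moreover have "P \<subseteq> U \<times> UNIV \<union> UNIV \<times> below r \<delta>"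
  proof
    fix x assume "x \<in> P"
    then obtain k h where x: "x = (k, h)" "(k, h) \<in> P"
      by (cases x) auto
    show "x \<in> U \<times> UNIV \<union> UNIV \<times> below r \<delta>"
    proof (cases "k \<in> U")
      case False
      then have "lt r h (a k)" "lt r (a k) \<delta>"
        using a x(2) \<open>\<forall>\<gamma>\<in>a ` (- U). lt r \<gamma> \<delta>\<close> by auto
      then show ?thesis
        using x(1) lt_trans by blast
    qed (use x in auto)
  qed
  ultimately show thesis
    using that by blast
qed

lemma not_finitely_blocked_below:
  assumes "\<not> finitely_blocked r A P" "\<not> has_escaping_seq r A P"
  shows "\<exists>\<alpha>. \<not> finitely_blocked r A (P \<inter> UNIV \<times> below r \<alpha>)"
proof -
  have bounded: "\<exists>\<delta>\<in>UNIV. \<forall>\<gamma>\<in>C. lt r \<gamma> \<delta>" if "C \<subseteq> UNIV" "countable C" for C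
    using countable_bounded[OF that(2)] by blast
  obtain U \<alpha> where U: "\<And>\<beta>. finite (U - A \<beta>)"
    and P: "P \<subseteq> U \<times> UNIV \<union> UNIV \<times> below r \<alpha>"
    using split_without_escaping_seq[OF bounded assms(2)] by (metis UNIV_I)
  have "finite U"
    using tower U unfolding tower_def pseudo_int_def by blast
  then have "finitely_blocked r A (U \<times> UNIV)"
    by (rule finitely_blocked_columns)
  moreover have "P \<subseteq> U \<times> UNIV \<union> (P \<inter> UNIV \<times> below r \<alpha>)"
    using P by blast
  ultimately show ?thesis
    using assms(1) finitely_blocked_Un finitely_blocked_subset by blast
qed

lemma finitely_blocked_uncountable_cofinality:
  assumes "cf_gt_omega r \<gamma>"
    and lower: "\<And>\<alpha>. lt r \<alpha> \<gamma> \<Longrightarrow> finitely_blocked r A (P \<inter> UNIV \<times> below r \<alpha>)"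
    and "\<not> has_escaping_seq r A P"
  shows "finitely_blocked r A (P \<inter> UNIV \<times> below r \<gamma>)"
proof -
  have bounded: "\<exists>\<delta>\<in>below r \<gamma>. \<forall>\<beta>\<in>C. lt r \<beta> \<delta>" if "C \<subseteq> below r \<gamma>" "countable C" for C
    using assms(1) that unfolding cf_gt_omega_def by blast
  have no_seq_below: "\<not> has_escaping_seq r A (P \<inter> UNIV \<times> below r \<gamma>)"
    using assms(3) unfolding has_escaping_seq_def by blast
  obtain U \<delta> where "lt r \<delta> \<gamma>" "\<And>\<beta>. lt r \<beta> \<gamma> \<Longrightarrow> finite (U - A \<beta>)"
    and split: "P \<inter> UNIV \<times> below r \<gamma> \<subseteq> U \<times> UNIV \<union> UNIV \<times> below r \<delta>"
    using split_without_escaping_seq[OF bounded no_seq_below] by (metis mem_Collect_eq)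
  then have "pseudo_int U (A ` below r \<gamma>)"
    unfolding pseudo_int_def by blast
  then have "finitely_blocked r A (U \<times> below r \<gamma>)"
    using assms(1) by (intro finitely_blocked_block) (auto simp: blocks_def)
  moreover have "finitely_blocked r A (P \<inter> UNIV \<times> below r \<delta>)"
    using lower \<open>lt r \<delta> \<gamma>\<close> by blast
  moreover have "P \<inter> UNIV \<times> below r \<gamma> \<subseteq> U \<times> below r \<gamma> \<union> (P \<inter> UNIV \<times> below r \<delta>)"
    using split by blast
  ultimately show ?thesis
    using finitely_blocked_Un finitely_blocked_subset by blast
qed

lemma has_escaping_seq_countable_cofinality:
  assumes "\<not> cf_gt_omega r \<gamma>"
    and lower: "\<And>\<alpha>. lt r \<alpha> \<gamma> \<Longrightarrow> finitely_blocked r A (P \<inter> UNIV \<times> below r \<alpha>)"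
    and unblocked: "\<not> finitely_blocked r A (P \<inter> UNIV \<times> below r \<gamma>)"
  shows "has_escaping_seq r A P"
proof -
  have "below r \<gamma> \<noteq> {}"
    using unblocked by (intro notI) simp
  then obtain c where c_below: "\<And>m. lt r (c m) \<gamma>"
    and c_cofinal: "\<And>\<alpha>. lt r \<alpha> \<gamma> \<Longrightarrow> \<forall>\<^sub>F m in sequentially. (\<alpha>, c m) \<in> r"
    using cofinal_seq_below assms(1) by metis
  define R where "R m = P \<inter> UNIV \<times> below r \<gamma> - UNIV \<times> below r (c m)" for m
  have R_unblocked: "\<not> finitely_blocked r A (R m)" for m
  proof
    assume "finitely_blocked r A (R m)"
    then have "finitely_blocked r A (R m \<union> (P \<inter> UNIV \<times> below r (c m)))"
      using lower[OF c_below] finitely_blocked_Un by blast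
    moreover have "P \<inter> UNIV \<times> below r \<gamma> \<subseteq> R m \<union> (P \<inter> UNIV \<times> below r (c m))"
      unfolding R_def by blast
    ultimately show False
      using unblocked finitely_blocked_subset by blast
  qed
  show ?thesis
  proof (rule has_escaping_seqI[where \<gamma> = \<gamma> and R = R])
    show "infinite {k. k \<notin> A \<gamma> \<and> (\<exists>h. (k, h) \<in> R m)}" for m
      using R_unblocked by (rule infinite_columns_outside_tower_block) (auto simp: R_def)
    show "R m \<subseteq> P" for m
      unfolding R_def by blast
    show "\<forall>\<^sub>F m in sequentially. R m \<subseteq> UNIV \<times> {h. (\<alpha>, h) \<in> r}" if "lt r \<alpha> \<gamma>" for \<alpha>
      using c_cofinal[OF that]
    proof (rule eventually_mono)
      fix m assume "(\<alpha>, c m) \<in> r"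
      then show "R m \<subseteq> UNIV \<times> {h. (\<alpha>, h) \<in> r}"
        unfolding R_def by (auto simp: not_lt_iff_le intro: le_trans)
    qed
  qed (use assms(1) in blast)
qed

lemma has_escaping_seq_if_not_finitely_blocked:
  assumes "\<not> finitely_blocked r A P"
  shows "has_escaping_seq r A P"
proof (rule ccontr)
  assume no_seq: "\<not> has_escaping_seq r A P"
  obtain \<gamma> where unblocked: "\<not> finitely_blocked r A (P \<inter> UNIV \<times> below r \<gamma>)"
    and least: "\<And>\<alpha>. \<not> finitely_blocked r A (P \<inter> UNIV \<times> below r \<alpha>) \<Longrightarrow> (\<gamma>, \<alpha>) \<in> r"
    using exists_least[of "{\<alpha>. \<not> finitely_blocked r A (P \<inter> UNIV \<times> below r \<alpha>)}"]
      not_finitely_blocked_below[OF assms no_seq] by auto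
  have lower: "finitely_blocked r A (P \<inter> UNIV \<times> below r \<alpha>)" if "lt r \<alpha> \<gamma>" for \<alpha>
    using least that not_lt_iff_le by blast
  show False
  proof (cases "cf_gt_omega r \<gamma>")
    case True
    then show False
      using finitely_blocked_uncountable_cofinality[OF True lower no_seq] unblocked by blast
  next
    case False
    then show False
      using has_escaping_seq_countable_cofinality[OF False lower unblocked] no_seq by blast
  qed
qed

lemma frechet_space_tower_space: "frechet_space (tower_space r A)"
  unfolding frechet_space_def
proof (intro allI impI)
  fix S x assume "S \<subseteq> topspace (tower_space r A) \<and> x \<in> tower_space r A closure_of S"
  then have x: "x \<in> tower_space r A closure_of S"
    by blast
  show "\<exists>\<sigma>. (\<forall>n. \<sigma> n \<in> S) \<and> limitin (tower_space r A) \<sigma> x sequentially"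
  proof (cases "x \<in> S")
    case True
    then show ?thesis
      by (intro exI[of _ "\<lambda>_. x"]) simp
  next
    case False
    have "x = None"
    proof (rule ccontr)
      assume "x \<noteq> None"
      then obtain p where "x = Some p"
        by blast
      then show False
        using x False openin_tower_space_Some[of r A p] unfolding in_closure_of by blast
    qed
    define P where "P = Some -` S"
    have "S \<subseteq> range Some"
      using False \<open>x = None\<close> notin_range_Some by (metis subsetI)
    then have "Some ` P = S"
      unfolding P_def image_vimage_eq by blast
    then have "\<not> finitely_blocked r A P"
      using x \<open>x = None\<close> not_finitely_blocked_if_in_closure by metis
    then obtain \<sigma> where "range \<sigma> \<subseteq> P" "escapes_blocks r A \<sigma>"
      using has_escaping_seq_if_not_finitely_blocked unfolding has_escaping_seq_def by blast
    then show ?thesis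
      using \<open>x = None\<close> limitin_None_if_escapes_blocks unfolding P_def
      by (intro exI[of _ "\<lambda>m. Some (\<sigma> m)"]) auto
  qed
qed

end

section \<open>Countable subspaces are first countable\<close>

lemma finite_blocks_refine:
  assumes cover: "\<And>c. c \<in> blocks r A \<Longrightarrow> \<exists>F. finite F \<and> F \<subseteq> CS \<and> c \<inter> P \<subseteq> \<Union>F"
    and "finite F0" "F0 \<subseteq> blocks r A"
  obtains F where "finite F" "F \<subseteq> CS" "- Some ` \<Union>F \<inter> Some ` P \<subseteq> - Some ` \<Union>F0"
proof -
  have "\<exists>F. finite F \<and> F \<subseteq> CS \<and> c \<inter> P \<subseteq> \<Union>F" if "c \<in> F0" for c
    using cover assms(3) that by blast
  then obtain G where G: "\<And>c. c \<in> F0 \<Longrightarrow> finite (G c)" "\<And>c. c \<in> F0 \<Longrightarrow> G c \<subseteq> CS"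
    "\<And>c. c \<in> F0 \<Longrightarrow> c \<inter> P \<subseteq> \<Union>(G c)"
    by metis
  have "P \<inter> \<Union>F0 \<subseteq> \<Union>(\<Union>(G ` F0))"
  proof
    fix q assume "q \<in> P \<inter> \<Union>F0"
    then obtain c where c: "c \<in> F0" "q \<in> c \<inter> P"
      by blast
    then have "q \<in> \<Union>(G c)"
      using G(3) by blast
    then show "q \<in> \<Union>(\<Union>(G ` F0))"
      using c(1) by blast
  qed
  then have "- Some ` \<Union>(\<Union>(G ` F0)) \<inter> Some ` P \<subseteq> - Some ` \<Union>F0"
    by auto
  moreover have "finite (\<Union>(G ` F0))" "\<Union>(G ` F0) \<subseteq> CS"
    using assms(2) G(1,2) by auto
  ultimately show thesis
    using that by blast
qed

lemma subtopology_nhds_None_refine: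
  assumes cover: "\<And>c. c \<in> blocks r A \<Longrightarrow> \<exists>F. finite F \<and> F \<subseteq> CS \<and> c \<inter> Some -` S \<subseteq> \<Union>F"
    and U: "openin (subtopology (tower_space r A) S) U" "None \<in> U"
  obtains F where "finite F" "F \<subseteq> CS" "- Some ` \<Union>F \<inter> S \<subseteq> U"
proof -
  obtain T where T: "openin (tower_space r A) T" "U = T \<inter> S"
    using U(1) unfolding openin_subtopology by blast
  moreover have "None \<in> T"
    using U(2) T(2) by blast
  ultimately obtain F0 where F0: "finite F0" "F0 \<subseteq> blocks r A" "- Some ` \<Union>F0 \<subseteq> T"
    using tower_space_nhds_None by meson
  obtain F where F: "finite F" "F \<subseteq> CS"
    and refine: "- Some ` \<Union>F \<inter> Some ` Some -` S \<subseteq> - Some ` \<Union>F0"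
    using finite_blocks_refine[OF cover F0(1,2)] by blast
  have "- Some ` \<Union>F \<inter> S \<subseteq> U"
  proof
    fix y assume y: "y \<in> - Some ` \<Union>F \<inter> S"
    then have "y \<in> - Some ` \<Union>F0"
      using refine by (cases y) auto
    then have "y \<in> T"
      using F0(3) by (rule rev_subsetD)
    then show "y \<in> U"
      using y unfolding T(2) by (simp only: Int_iff)
  qed
  then show thesis
    using that F by blast
qed

lemma tower_space_countable_nhds_base_None:
  assumes "countable CS" "CS \<subseteq> blocks r A"
    and cover: "\<And>c. c \<in> blocks r A \<Longrightarrow> \<exists>F. finite F \<and> F \<subseteq> CS \<and> c \<inter> Some -` S \<subseteq> \<Union>F"
  shows "\<exists>\<B>. countable \<B> \<and> (\<forall>V\<in>\<B>. openin (subtopology (tower_space r A) S) V) \<and>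
    (\<forall>U. openin (subtopology (tower_space r A) S) U \<and> None \<in> U \<longrightarrow> (\<exists>V\<in>\<B>. None \<in> V \<and> V \<subseteq> U))"
proof -
  define \<B> where "\<B> = (\<lambda>F. - Some ` \<Union>F \<inter> S) ` {F. finite F \<and> F \<subseteq> CS}"
  have "countable \<B>"
    unfolding \<B>_def by (intro countable_image countable_Collect_finite_subset assms(1))
  moreover have "openin (subtopology (tower_space r A) S) V" if "V \<in> \<B>" for V
  proof -
    from that obtain F where F: "finite F" "F \<subseteq> CS" and V: "V = - Some ` \<Union>F \<inter> S"
      unfolding \<B>_def by blast
    have "openin (tower_space r A) (- Some ` \<Union>F)"
      using F assms(2) by (intro openin_tower_space_blocks_compl) auto
    then show ?thesis
      unfolding V by (rule openin_subtopology_Int)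
  qed
  moreover have "\<exists>V\<in>\<B>. None \<in> V \<and> V \<subseteq> U"
    if U: "openin (subtopology (tower_space r A) S) U" "None \<in> U" for U
  proof -
    obtain F where F: "finite F" "F \<subseteq> CS" "- Some ` \<Union>F \<inter> S \<subseteq> U"
      using subtopology_nhds_None_refine[OF cover U] by blast
    have "None \<in> S"
      using U openin_imp_subset by fastforce
    then have "None \<in> - Some ` \<Union>F \<inter> S"
      by auto
    moreover have "- Some ` \<Union>F \<inter> S \<in> \<B>"
      unfolding \<B>_def using F by (intro image_eqI[where x = F]) auto
    ultimately show ?thesis
      using F(3) by (intro bexI[of _ "- Some ` \<Union>F \<inter> S"] conjI)
  qed
  ultimately show ?thesis
    by blast
qed

context tower_setting
begin

lemma block_cases_trace_representative:
  assumes "countable H"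
    and s_trace: "\<And>a. H \<inter> below r (s a) = H \<inter> below r a"
    and s_least: "\<And>a b. H \<inter> below r b = H \<inter> below r a \<Longrightarrow> (s a, b) \<in> r"
    and "c \<in> blocks r A"
  obtains (column) n where "c = {n} \<times> UNIV"
  | (product) X a where "c = X \<times> below r a" "finite (X - A (s a))"
proof -
  consider n where "c = {n} \<times> UNIV" | a where "c = A a \<times> below r a"
    | a B where "c = B \<times> below r a" "cf_gt_omega r a" "pseudo_int B (A ` below r a)"
    using assms(4) unfolding blocks_def by blast
  then show thesis
  proof cases
    case 1
    then show ?thesis
      by (rule column)
  next
    case (2 a)
    have "finite (A a - A (s a))"
      using s_least A_almost_antimono by blast
    then show ?thesis
      by (rule product[OF 2])
  next
    case (3 a B)
    obtain g where "lt r g a" "H \<inter> below r g = H \<inter> below r a"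
      using trace_below_uncountable_cofinality[OF 3(2) assms(1)] by blast
    then have "lt r (s a) a"
      using s_least le_lt_trans by blast
    then have "finite (B - A (s a))"
      using 3(3) unfolding pseudo_int_def by blast
    then show ?thesis
      by (rule product[OF 3(1)])
  qed
qed

lemma product_inter_covered_by_trace:
  assumes "snd ` P \<inter> below r b = snd ` P \<inter> below r a"
  shows "X \<times> below r a \<inter> P \<subseteq> A b \<times> below r b \<union> (X - A b) \<times> UNIV"
proof
  fix q assume q: "q \<in> X \<times> below r a \<inter> P"
  then have "snd q \<in> snd ` P \<inter> below r a"
    by auto
  then have "lt r (snd q) b"
    using assms by blast
  then show "q \<in> A b \<times> below r b \<union> (X - A b) \<times> UNIV"
    using q by (cases q) auto
qed

lemma countable_blocks_tracing:
  assumes "countable P"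
  obtains CS where "countable CS" "CS \<subseteq> blocks r A"
    "\<And>c. c \<in> blocks r A \<Longrightarrow> \<exists>F. finite F \<and> F \<subseteq> CS \<and> c \<inter> P \<subseteq> \<Union>F"
proof -
  have "countable (snd ` P)"
    using assms by simp
  then obtain s where s_countable: "countable (range s)"
    and s_trace: "\<And>a. snd ` P \<inter> below r (s a) = snd ` P \<inter> below r a"
    and s_least: "\<And>a b. snd ` P \<inter> below r b = snd ` P \<inter> below r a \<Longrightarrow> (s a, b) \<in> r"
    by (rule least_trace_representatives) blast
  define CS where "CS = range (\<lambda>n. {n} \<times> UNIV) \<union> (\<lambda>b. A b \<times> below r b) ` range s"
  have "\<exists>F. finite F \<and> F \<subseteq> CS \<and> c \<inter> P \<subseteq> \<Union>F" if c: "c \<in> blocks r A" for c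
  proof -
    consider n where "c = {n} \<times> UNIV"
      | X a where "c = X \<times> below r a" "finite (X - A (s a))"
      using block_cases_trace_representative[OF \<open>countable (snd ` P)\<close> s_trace s_least c] by blast
    then show ?thesis
    proof cases
      case 1
      then show ?thesis
        unfolding CS_def by (intro exI[of _ "{c}"]) auto
    next
      case (2 X a)
      let ?F = "insert (A (s a) \<times> below r (s a)) ((\<lambda>n. {n} \<times> UNIV) ` (X - A (s a)))"
      have "c \<inter> P \<subseteq> \<Union>?F"
        using product_inter_covered_by_trace[OF s_trace[of a], of X] 2(1) by auto
      moreover have "finite ?F" "?F \<subseteq> CS"
        using 2(2) unfolding CS_def by auto
      ultimately show ?thesis
        by blast
    qed
  qed
  moreover have "countable CS"
    unfolding CS_def using s_countable by simp
  moreover have "CS \<subseteq> blocks r A"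
    unfolding CS_def by (auto simp: column_in_blocks tower_block_in_blocks)
  ultimately show thesis
    using that by blast
qed

lemma CFC_tower_space: "CFC (tower_space r A)"
  unfolding CFC_def first_countable_def
proof (intro allI impI ballI)
  fix S x
  assume S: "S \<subseteq> topspace (tower_space r A) \<and> countable S"
    and x: "x \<in> topspace (subtopology (tower_space r A) S)"
  show "\<exists>\<B>. countable \<B> \<and> (\<forall>V\<in>\<B>. openin (subtopology (tower_space r A) S) V) \<and>
    (\<forall>U. openin (subtopology (tower_space r A) S) U \<and> x \<in> U \<longrightarrow> (\<exists>V\<in>\<B>. x \<in> V \<and> V \<subseteq> U))"
  proof (cases x)
    case None
    have "countable (Some ` Some -` S)"
      using S countable_subset[OF image_vimage_subset] by blast
    then have "countable (Some -` S)"
      by (rule countable_image_inj_on) simp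
    then obtain CS where CS: "countable CS" "CS \<subseteq> blocks r A"
      "\<And>c. c \<in> blocks r A \<Longrightarrow> \<exists>F. finite F \<and> F \<subseteq> CS \<and> c \<inter> Some -` S \<subseteq> \<Union>F"
      by (rule countable_blocks_tracing) blast
    then show ?thesis
      using None tower_space_countable_nhds_base_None[OF CS] by simp
  next
    case (Some p)
    then have "openin (subtopology (tower_space r A) S) {x}"
      using x openin_subtopology_Int[OF openin_tower_space_Some[of r A p], of S] by (simp add: Int_absorb2)
    then show ?thesis
      by (intro exI[of _ "{{x}}"]) auto
  qed
qed

end

section \<open>Failure of L-selectivity\<close>

definition column_map :: "enat \<Rightarrow> (nat \<times> 'k) option set" where
  "column_map y = (case y of enat n \<Rightarrow> Some ` ({n} \<times> UNIV) | \<infinity> \<Rightarrow> {None})"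

lemma closedin_column_map: "closedin (tower_space r A) (column_map y)"
proof (cases y)
  case (enat n)
  have "openin (tower_space r A) (- Some ` \<Union>{{n} \<times> UNIV})"
    using column_in_blocks by (intro openin_tower_space_blocks_compl) auto
  then show ?thesis
    unfolding closedin_def enat column_map_def by (simp add: Compl_eq_Diff_UNIV)
next
  case infinity
  have "(\<Union>p. {Some p}) = UNIV - {None}"
    by (auto simp: not_None_eq)
  moreover have "openin (tower_space r A) (\<Union>p. {Some p})"
    using openin_tower_space_Some by blast
  ultimately have "openin (tower_space r A) (UNIV - {None})"
    by metis
  then show ?thesis
    unfolding closedin_def infinity column_map_def by simp
qed

context tower_setting
begin

lemma block_bounded:
  assumes "c \<in> blocks r A"
  obtains N \<alpha> where "c \<subseteq> {..N} \<times> UNIV \<union> UNIV \<times> below r \<alpha>"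
proof -
  consider n where "c = {n} \<times> UNIV" | X \<alpha> where "c = X \<times> below r \<alpha>"
    using assms unfolding blocks_def by blast
  then show thesis
  proof cases
    case (1 n)
    then have "c \<subseteq> {..n} \<times> UNIV \<union> UNIV \<times> below r \<alpha>" for \<alpha>
      by auto
    then show ?thesis
      using that by blast
  next
    case (2 X \<alpha>)
    then have "c \<subseteq> {..0} \<times> UNIV \<union> UNIV \<times> below r \<alpha>"
      by auto
    then show ?thesis
      using that by blast
  qed
qed

lemma finite_blocks_avoid_row:
  assumes "finite F" "F \<subseteq> blocks r A"
  obtains N \<eta> where "\<And>m. N < m \<Longrightarrow> (m, \<eta>) \<notin> \<Union>F"
proof -
  have "\<forall>c\<in>F. \<exists>N \<alpha>. c \<subseteq> {..N} \<times> UNIV \<union> UNIV \<times> below r \<alpha>"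
    using assms(2) block_bounded by (metis subsetD)
  then obtain N \<alpha> where N\<alpha>: "\<And>c. c \<in> F \<Longrightarrow> c \<subseteq> {..N c} \<times> UNIV \<union> UNIV \<times> below r (\<alpha> c)"
    by metis
  obtain N0 where N0: "\<And>c. c \<in> F \<Longrightarrow> N c \<le> N0"
    using finite_nat_set_iff_bounded_le[of "N ` F"] assms(1) by auto
  obtain \<eta> where \<eta>: "\<And>c. c \<in> F \<Longrightarrow> lt r (\<alpha> c) \<eta>"
    using countable_bounded[of "\<alpha> ` F"] assms(1) by (auto intro: countable_finite)
  have "(m, \<eta>) \<notin> c" if "N0 < m" "c \<in> F" for m c
  proof
    assume "(m, \<eta>) \<in> c"
    then have "lt r \<eta> (\<alpha> c)"
      using N\<alpha>[OF that(2)] N0[OF that(2)] that(1) by auto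
    then show False
      using \<eta>[OF that(2)] lt_trans unfolding lt_def by blast
  qed
  then show thesis
    using that by blast
qed

lemma open_column_map_meets:
  assumes W: "openin (tower_space r A) W"
  shows "open {y. column_map y \<inter> W \<noteq> {}}"
proof -
  have "\<exists>N. {enat N<..} \<subseteq> {y. column_map y \<inter> W \<noteq> {}}" if "None \<in> W"
  proof -
    obtain F where F: "finite F" "F \<subseteq> blocks r A" "- Some ` \<Union>F \<subseteq> W"
      using tower_space_nhds_None W \<open>None \<in> W\<close> by meson
    obtain N \<eta> where avoid: "\<And>m. N < m \<Longrightarrow> (m, \<eta>) \<notin> \<Union>F"
      using finite_blocks_avoid_row[OF F(1,2)] by blast
    have "column_map y \<inter> W \<noteq> {}" if "enat N < y" for y
    proof (cases y)
      case (enat m)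
      then have "(m, \<eta>) \<notin> \<Union>F"
        using avoid that by simp
      then have "Some (m, \<eta>) \<in> - Some ` \<Union>F"
        by auto
      then have "Some (m, \<eta>) \<in> W"
        using F(3) by (rule rev_subsetD)
      then show ?thesis
        by (auto simp: enat column_map_def)
    qed (use \<open>None \<in> W\<close> in \<open>auto simp: column_map_def\<close>)
    then show ?thesis
      by blast
  qed
  then show ?thesis
    unfolding open_enat_iff by (auto simp: column_map_def)
qed

lemma lsc_closed_column_map: "lsc_closed euclidean (tower_space r A) column_map"
  unfolding lsc_closed_def
proof (intro conjI ballI allI impI)
  show "closedin (tower_space r A) (column_map y)" for y
    by (rule closedin_column_map)
  show "column_map y \<noteq> {}" for y
    by (cases y) (auto simp: column_map_def)
  show "openin euclidean {y \<in> topspace euclidean. column_map y \<inter> W \<noteq> {}}"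
    if "openin (tower_space r A) W" for W
    using open_column_map_meets[OF that] by simp
qed

lemma no_continuous_selection_column_map:
  assumes cont: "continuous_map euclidean (tower_space r A) s"
    and select: "\<And>y. s y \<in> column_map y"
  shows False
proof -
  have "s \<infinity> = None"
    using select[of \<infinity>] by (simp add: column_map_def)
  obtain g where g: "\<And>n. s (enat n) = Some (n, g n)"
  proof -
    have "\<exists>h. s (enat n) = Some (n, h)" for n
      using select[of "enat n"] by (auto simp: column_map_def)
    then show thesis
      using that by metis
  qed
  obtain \<delta> where \<delta>: "\<And>n. lt r (g n) \<delta>"
    using countable_bounded[of "range g"] by auto
  define Z where "Z = A \<delta> \<times> below r \<delta>"
  have "openin (tower_space r A) (- Some ` Z)"
    using openin_tower_space_blocks_compl[of "{Z}" r A] unfolding Z_def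
    by (simp add: tower_block_in_blocks)
  then have "openin euclidean {y \<in> topspace euclidean. s y \<in> - Some ` Z}"
    by (rule openin_continuous_map_preimage[OF cont])
  then have "open {y. s y \<in> - Some ` Z}"
    by simp
  moreover have "\<infinity> \<in> {y. s y \<in> - Some ` Z}"
    using \<open>s \<infinity> = None\<close> by auto
  ultimately obtain N where N: "{enat N<..} \<subseteq> {y. s y \<in> - Some ` Z}"
    unfolding open_enat_iff by blast
  obtain m where "N < m" "m \<in> A \<delta>"
    using infinite_A[of \<delta>] unfolding infinite_nat_iff_unbounded by blast
  then have "enat m \<in> {enat N<..}"
    by simp
  then have "s (enat m) \<in> - Some ` Z"
    using N by (metis mem_Collect_eq subsetD)
  moreover have "s (enat m) \<in> Some ` Z"
    unfolding Z_def g using \<open>m \<in> A \<delta>\<close> \<delta> by blast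
  ultimately show False
    by blast
qed

lemma not_L_selective_tower_space: "\<not> L_selective (tower_space r A)"
  unfolding L_selective_def
  using lsc_closed_column_map no_continuous_selection_column_map by blast

end

theorem mainTheorem9:
  fixes r :: "'k rel" and A :: "'k \<Rightarrow> nat set"
  assumes "is_p_ordinal r"
    and "tower r A"
  shows "CFC (tower_space r A) \<and> frechet_space (tower_space r A) \<and>
         \<not> L_selective (tower_space r A)"
proof -
  have "well_order_on UNIV r"
    using assms(1) card_order_on_well_order_on unfolding is_p_ordinal_def by blast
  then interpret tower_setting r A
    using assms(2) by unfold_locales
  show ?thesis
    using CFC_tower_space frechet_space_tower_space not_L_selective_tower_space by blast
qed

end
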